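(* Consider the normalised two-player, two-market Cournot game with per-period utility $u(x,a)=-2x(x+a)$ for a player playing $x$ against an opponent playing $a$. Let $a_0\neq 0$ be the opponent's strategy at time $0$. Suppose the moving player responds with $c\,a_0$ for some $c\in\mathbb{R}$, and that the opponent, facing the same problem by symmetry, responds at the next step with $c\cdot(c\,a_0)=c^2a_0$. Let $$U_2(c)=u(c\,a_0,a_0)+u(c\,a_0,c^2a_0)$$ be the moving player's total utility over a time horizon of two steps. Then the critical points of $U_2$ on $\mathbb{R}$ are exactly $c=-1$ and $c=-\tfrac13$, and $c=-\tfrac13$ is the unique local maximiser of $U_2$; that is, the optimal response for a time horizon of two moves is $-\frac{a_0}{3}$.
   Context: Two players each have one unit of a homogeneous good (zero production and transportation cost) to split between two markets with inverse-linear demand. A player's strategy is normalised to a number in $[-1,1]$ with $0$ the unique Cournot equilibrium split; the normalised one-period utility (relative to equilibrium) of a player playing $x$ against an opponent playing $a$ is $u(x,a)=-2x(x+a)$. Players update their strategies alternately, each time responding to the opponent's current strategy. *)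

theory Defs
  imports Complex_Main
begin

definition u :: "real \<Rightarrow> real \<Rightarrow> real" where
  "u x a = -2 * x * (x + a)"

definition U2 :: "real \<Rightarrow> real \<Rightarrow> real" where
  "U2 a0 c = u (c * a0) a0 + u (c * a0) (c^2 * a0)"

definition is_local_max :: "(real \<Rightarrow> real) \<Rightarrow> real \<Rightarrow> bool" where
  "is_local_max f c \<longleftrightarrow> (\<exists>e>0. \<forall>y. \<bar>y - c\<bar> < e \<longrightarrow> f y \<le> f c)"

end

theory Submission
  imports Defs
begin

text \<open>
  The two-step utility factors as \<open>U2 a0 c = -2 a0\<^sup>2 c (c + 1)\<^sup>2\<close>, a cubic with derivative
  \<open>-2 a0\<^sup>2 (3c + 1)(c + 1)\<close>, so the critical points are \<open>-1\<close> and \<open>-1/3\<close>. Since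
  \<open>U2 a0 y - U2 a0 (-1/3) = -2 a0\<^sup>2 (y + 1/3)\<^sup>2 (y + 4/3)\<close>, the point \<open>-1/3\<close> is a maximum
  on \<open>y > -4/3\<close>; at \<open>-1\<close> the utility is \<open>0\<close> but it is positive just to the right of \<open>-1\<close>.
  By Fermat's rule every local maximiser is a critical point.
\<close>

lemma U2_factored: "U2 a0 c = -2 * a0\<^sup>2 * c * (c + 1)\<^sup>2"
  unfolding U2_def u_def by (simp add: algebra_simps power2_eq_square)

lemma U2_has_real_derivative:
  "(U2 a0 has_real_derivative -2 * a0\<^sup>2 * ((3 * c + 1) * (c + 1))) (at c)"
proof -
  have "U2 a0 = (\<lambda>c. -2 * a0\<^sup>2 * c * (c + 1)\<^sup>2)"
    by (simp add: fun_eq_iff U2_factored)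
  then show ?thesis
    by (auto intro!: derivative_eq_intros simp: algebra_simps power2_eq_square)
qed

lemma U2_critical_iff:
  assumes "a0 \<noteq> 0"
  shows "(U2 a0 has_real_derivative 0) (at c) \<longleftrightarrow> c = -1 \<or> c = -1/3"
proof -
  have "(U2 a0 has_real_derivative 0) (at c) \<longleftrightarrow> -2 * a0\<^sup>2 * ((3 * c + 1) * (c + 1)) = 0"
    using U2_has_real_derivative DERIV_unique by metis
  also have "\<dots> \<longleftrightarrow> (3 * c + 1) * (c + 1) = 0"
    using assms by simp
  also have "\<dots> \<longleftrightarrow> c = -1 \<or> c = -1/3"
    unfolding mult_eq_0_iff by linarith
  finally show ?thesis .
qed

lemma is_local_max_imp_derivative_zero:
  assumes "is_local_max f c" and "(f has_real_derivative D) (at c)"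
  shows "D = 0"
proof -
  obtain e where "e > 0" and "\<And>y. \<bar>y - c\<bar> < e \<Longrightarrow> f y \<le> f c"
    using assms(1) unfolding is_local_max_def by blast
  then show ?thesis
    using DERIV_local_max[OF assms(2)] by (metis abs_minus_commute dist_real_def)
qed

lemma U2_diff_at_minus_one_third:
  "U2 a0 y - U2 a0 (-1/3) = -2 * a0\<^sup>2 * (y + 1/3)\<^sup>2 * (y + 4/3)"
  by (simp add: U2_factored field_simps power2_eq_square)

lemma is_local_max_U2_minus_one_third: "is_local_max (U2 a0) (-1/3)"
  unfolding is_local_max_def
proof (intro exI[of _ 1] conjI allI impI)
  fix y :: real
  assume "\<bar>y - -1/3\<bar> < 1"
  then have "0 \<le> a0\<^sup>2 * (y + 1/3)\<^sup>2 * (y + 4/3)"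
    by simp
  then show "U2 a0 y \<le> U2 a0 (-1/3)"
    using U2_diff_at_minus_one_third[of a0 y] by linarith
qed simp

lemma not_is_local_max_U2_minus_one:
  assumes "a0 \<noteq> 0"
  shows "\<not> is_local_max (U2 a0) (-1)"
proof
  assume "is_local_max (U2 a0) (-1)"
  then obtain e where "e > 0" and le: "\<And>y. \<bar>y - -1\<bar> < e \<Longrightarrow> U2 a0 y \<le> U2 a0 (-1)"
    unfolding is_local_max_def by blast
  define y where "y = -1 + min e 1 / 2"
  have "-1 < y" "y < 0" "\<bar>y - -1\<bar> < e"
    using \<open>e > 0\<close> by (auto simp: y_def)
  then have "0 < a0\<^sup>2 * (-y) * (y + 1)\<^sup>2"
    using assms by (intro mult_pos_pos) auto
  then have "U2 a0 (-1) < U2 a0 y"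
    by (simp add: U2_factored mult_ac)
  with le[OF \<open>\<bar>y - -1\<bar> < e\<close>] show False
    by simp
qed

theorem theorem2:
  fixes a0 :: real
  assumes "a0 \<noteq> 0"
  shows "{c. (U2 a0 has_real_derivative 0) (at c)} = {-1, -1/3}
         \<and> {c. is_local_max (U2 a0) c} = {-1/3}"
proof
  show "{c. (U2 a0 has_real_derivative 0) (at c)} = {-1, -1/3}"
    using U2_critical_iff[OF assms] by auto
  have "(U2 a0 has_real_derivative 0) (at c)" if "is_local_max (U2 a0) c" for c
    using is_local_max_imp_derivative_zero[OF that U2_has_real_derivative] U2_has_real_derivative
    by metis
  then show "{c. is_local_max (U2 a0) c} = {-1/3}"
    using U2_critical_iff[OF assms] is_local_max_U2_minus_one_third
      not_is_local_max_U2_minus_one[OF assms] by auto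
qed

end
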